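(* Let $G$ be a loopless multigraph, let $k \geq 1$ be an integer, and let $M$ be a maximal $k$-edge-colorable subgraph of $G$ (maximal with respect to inclusion of edge sets). Let $F = \{v \in V(G) : d_M(v) \leq k - \mu(v)\}$. Then for every $v \in V(G)$ with $d_M(v) < k$, we have $d_F(v) \leq d_M(v)$.
   Context: A proper $k$-edge-coloring of a loopless multigraph is a map $E(G)\to\{1,\dots,k\}$ giving distinct colors to any two distinct edges sharing at least one endpoint; a multigraph is $k$-edge-colorable if it has one. For vertices $v,w$, $\mu(v,w)=\mu_G(v,w)$ is the number of edges joining $v$ and $w$, and $\mu(v)=\mu_G(v)=\max_{w\in V(G)}\mu_G(v,w)$. For $M\subseteq E(G)$ (viewed as a spanning subgraph), $d_M(v)$ is the number of edges of $M$ incident to $v$. For $F\subseteq V(G)$, $d_F(v)=\sum_{w\in F}\mu_G(v,w)$. *)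

theory Defs
  imports Main
begin

definition loopless_multigraph :: "'a set \<Rightarrow> 'e set \<Rightarrow> ('e \<Rightarrow> 'a set) \<Rightarrow> bool" where
  "loopless_multigraph V E ends \<longleftrightarrow> finite V \<and> finite E \<and>
     (\<forall>e\<in>E. \<exists>u v. u \<in> V \<and> v \<in> V \<and> u \<noteq> v \<and> ends e = {u, v})"

definition proper_edge_coloring :: "('e \<Rightarrow> 'a set) \<Rightarrow> 'e set \<Rightarrow> nat \<Rightarrow> ('e \<Rightarrow> nat) \<Rightarrow> bool" where
  "proper_edge_coloring ends M k c \<longleftrightarrow>
     (\<forall>e\<in>M. c e \<in> {1..k}) \<and>
     (\<forall>e\<in>M. \<forall>e'\<in>M. e \<noteq> e' \<and> ends e \<inter> ends e' \<noteq> {} \<longrightarrow> c e \<noteq> c e')"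

definition edge_colorable :: "('e \<Rightarrow> 'a set) \<Rightarrow> 'e set \<Rightarrow> nat \<Rightarrow> bool" where
  "edge_colorable ends M k \<longleftrightarrow> (\<exists>c. proper_edge_coloring ends M k c)"

definition maximal_colorable_subgraph :: "'e set \<Rightarrow> ('e \<Rightarrow> 'a set) \<Rightarrow> nat \<Rightarrow> 'e set \<Rightarrow> bool" where
  "maximal_colorable_subgraph E ends k M \<longleftrightarrow> M \<subseteq> E \<and> edge_colorable ends M k \<and>
     (\<forall>M'. M \<subset> M' \<and> M' \<subseteq> E \<longrightarrow> \<not> edge_colorable ends M' k)"

definition mult :: "'e set \<Rightarrow> ('e \<Rightarrow> 'a set) \<Rightarrow> 'a \<Rightarrow> 'a \<Rightarrow> nat" where
  "mult E ends v w = card {e\<in>E. ends e = {v, w}}"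

definition mu :: "'a set \<Rightarrow> 'e set \<Rightarrow> ('e \<Rightarrow> 'a set) \<Rightarrow> 'a \<Rightarrow> nat" where
  "mu V E ends v = Max ((\<lambda>w. mult E ends v w) ` V)"

definition deg :: "'e set \<Rightarrow> ('e \<Rightarrow> 'a set) \<Rightarrow> 'a \<Rightarrow> nat" where
  "deg M ends v = card {e\<in>M. v \<in> ends e}"

definition degF :: "'e set \<Rightarrow> ('e \<Rightarrow> 'a set) \<Rightarrow> 'a set \<Rightarrow> 'a \<Rightarrow> nat" where
  "degF E ends F v = (\<Sum>w\<in>F. mult E ends v w)"

end

theory Submission
  imports Defs "HOL-Combinatorics.Transposition"
begin

(*
  Fix a proper k-colouring c of M and a vertex v with d_M(v) < k, so that some colour a is
  missing at v.  As in Vizing's fan argument, let Y be the set of vertices reached from v by a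
  fan: start with an edge at v that is not in M (by maximality it cannot be added to M) and
  repeatedly pass along an M-edge at v whose colour is missing at the vertex reached so far.
  Shifting colours down a fan shows that no colour missing at v is missing at a vertex of Y,
  and an (a, b)-Kempe chain argument shows that distinct vertices of Y have disjoint sets of
  missing colours.

  Every edge from v to a vertex outside Y lies in M.  For w in F we have
  mu(v, w) <= k - d_M(w) <= (number of colours missing at w), and the disjoint missing sets of
  the vertices of Y inject into the colours of the M-edges from v into Y.  Summing over F gives
  d_F(v) <= d_M(v).
*)

section \<open>Connected edge sets of maximum degree two\<close>

definition edge_adjacency :: "('e \<Rightarrow> 'a set) \<Rightarrow> 'e set \<Rightarrow> ('e \<times> 'e) set" where
  "edge_adjacency ends K = {(e, f). e \<in> K \<and> f \<in> K \<and> ends e \<inter> ends f \<noteq> {}}"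

lemma edge_adjacency_rtrancl_sym:
  "(e, f) \<in> (edge_adjacency ends K)\<^sup>* \<Longrightarrow> (f, e) \<in> (edge_adjacency ends K)\<^sup>*"
proof (induction rule: rtrancl_induct)
  case (step y z)
  then have "(z, y) \<in> edge_adjacency ends K" unfolding edge_adjacency_def by auto
  then show ?case using step.IH by (rule converse_rtrancl_into_rtrancl)
qed simp

lemma connected_edges_leave_subset:
  assumes conn: "\<forall>f\<in>K. (h, f) \<in> (edge_adjacency ends K)\<^sup>*"
    and "h \<in> S" "S \<subset> K"
  shows "\<exists>f\<in>K - S. \<exists>g\<in>S. ends f \<inter> ends g \<noteq> {}"
proof -
  obtain f0 where f0: "f0 \<in> K - S" using assms(3) by auto
  have "(h, f0) \<in> (edge_adjacency ends K)\<^sup>*" using conn f0 by auto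
  then have "f0 \<in> S \<or> (\<exists>f\<in>K - S. \<exists>g\<in>S. ends f \<inter> ends g \<noteq> {})"
    by (induction rule: rtrancl_induct) (use assms(2) in \<open>auto simp: edge_adjacency_def\<close>)
  then show ?thesis using f0 by auto
qed

lemma card_vertices_connected_extend:
  assumes fin: "finite K" and two: "\<forall>f\<in>K. card (ends f) = 2"
    and conn: "\<forall>f\<in>K. (h, f) \<in> (edge_adjacency ends K)\<^sup>*"
    and "h \<in> S" "S \<subseteq> K" "card (\<Union>(ends ` S)) \<le> card S + 1"
  shows "card (\<Union>(ends ` K)) \<le> card K + 1"
  using assms(4-)
proof (induction "card (K - S)" arbitrary: S)
  case 0
  then have "S = K" using fin by (simp add: Diff_eq_empty_iff subset_antisym)
  with 0 show ?case by simp
next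
  case (Suc n)
  then have "S \<subset> K" by auto
  then obtain f g where fg: "f \<in> K - S" "g \<in> S" "ends f \<inter> ends g \<noteq> {}"
    using connected_edges_leave_subset[OF conn \<open>h \<in> S\<close>] by blast
  obtain x where x: "x \<in> ends f" "x \<in> \<Union>(ends ` S)" using fg by auto
  have "card (ends f) = 2" using two fg(1) by auto
  then have "card (ends f - {x}) = 1" using x(1) by (simp add: card_ge_0_finite)
  moreover have "\<Union>(ends ` insert f S) = (ends f - {x}) \<union> \<Union>(ends ` S)" using x by auto
  ultimately have "card (\<Union>(ends ` insert f S)) \<le> 1 + card (\<Union>(ends ` S))"
    by (metis card_Un_le)
  moreover have "finite S" using Suc.prems(2) fin finite_subset by auto
  ultimately have "card (\<Union>(ends ` insert f S)) \<le> card (insert f S) + 1"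
    using Suc.prems(3) fg(1) by simp
  moreover have "n = card (K - insert f S)" using Suc.hyps(2) fg(1) fin
    by (metis Diff_insert card_Diff_singleton diff_Suc_1 finite_Diff)
  ultimately show ?case using Suc fg(1) by blast
qed

lemma card_vertices_connected_le:
  assumes "finite K" "\<forall>f\<in>K. card (ends f) = 2" "h \<in> K"
    and "\<forall>f\<in>K. (h, f) \<in> (edge_adjacency ends K)\<^sup>*"
  shows "card (\<Union>(ends ` K)) \<le> card K + 1"
  by (rule card_vertices_connected_extend[of _ _ h "{h}"]) (use assms in auto)

lemma sum_deg_eq_twice_card:
  assumes fin: "finite K" and two: "\<forall>f\<in>K. card (ends f) = 2"
  shows "(\<Sum>x\<in>\<Union>(ends ` K). deg K ends x) = 2 * card K"
proof -
  let ?W = "\<Union>(ends ` K)"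
  have "finite (ends f)" if "f \<in> K" for f using two that by (metis card.infinite zero_neq_numeral)
  then have finW: "finite ?W" using fin by blast
  have "(\<Sum>x\<in>?W. deg K ends x) = (\<Sum>x\<in>?W. \<Sum>f\<in>K. if x \<in> ends f then 1 else 0)"
    using fin by (simp add: deg_def sum.If_cases Int_def)
  also have "\<dots> = (\<Sum>f\<in>K. \<Sum>x\<in>?W. if x \<in> ends f then 1 else 0)" by (rule sum.swap)
  also have "\<dots> = (\<Sum>f\<in>K. card (ends f))"
  proof (rule sum.cong)
    fix f assume "f \<in> K"
    then have "?W \<inter> {x. x \<in> ends f} = ends f" by auto
    then show "(\<Sum>x\<in>?W. if x \<in> ends f then 1 else 0) = card (ends f)"
      using finW by (simp add: sum.If_cases)
  qed simp
  also have "\<dots> = 2 * card K" using two by simp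
  finally show ?thesis .
qed

text \<open>Counting degrees, three vertices of degree one would force more than |K| + 1 vertices.\<close>
lemma connected_max_deg_two_no_three_leaves:
  assumes fin: "finite K" and two: "\<forall>f\<in>K. card (ends f) = 2" and h: "h \<in> K"
    and conn: "\<forall>f\<in>K. (h, f) \<in> (edge_adjacency ends K)\<^sup>*"
    and deg2: "\<forall>x. deg K ends x \<le> 2"
    and dist: "a \<noteq> b" "a \<noteq> d" "b \<noteq> d"
    and leaf: "\<forall>x\<in>{a, b, d}. (\<exists>f\<in>K. x \<in> ends f) \<and> deg K ends x \<le> 1"
  shows False
proof -
  let ?W = "\<Union>(ends ` K)"
  have "finite (ends f)" if "f \<in> K" for f using two that by (metis card.infinite zero_neq_numeral)
  then have finW: "finite ?W" using fin by blast
  have L: "{a, b, d} \<subseteq> ?W" using leaf by auto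
  have three: "card {a, b, d} = 3" using dist by simp
  have "2 * card K = (\<Sum>x\<in>?W - {a, b, d}. deg K ends x) + (\<Sum>x\<in>{a, b, d}. deg K ends x)"
    using sum_deg_eq_twice_card[OF fin two] finW L by (simp add: sum.subset_diff)
  also have "\<dots> \<le> (\<Sum>x\<in>?W - {a, b, d}. 2) + (\<Sum>x\<in>{a, b, d}. 1)"
    using deg2 leaf by (intro add_mono sum_mono) auto
  also have "\<dots> = 2 * (card ?W - 3) + 3"
    using L finW three by (simp add: card_Diff_subset)
  finally have "2 * card K \<le> 2 * (card ?W - 3) + 3" .
  moreover have "card ?W \<le> card K + 1" using card_vertices_connected_le[OF fin two h conn] .
  moreover have "card ?W \<ge> 3" using L finW card_mono three by metis
  ultimately show False by linarith
qed

section \<open>Missing colours and Kempe chains\<close>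

locale loopless_edges =
  fixes E :: "'e set" and ends :: "'e \<Rightarrow> 'a set" and k :: nat
  assumes finite_E: "finite E" and ends_E: "\<forall>e\<in>E. \<exists>a b. a \<noteq> b \<and> ends e = {a, b}"
begin

definition missing :: "'e set \<Rightarrow> ('e \<Rightarrow> nat) \<Rightarrow> 'a \<Rightarrow> nat set" where
  "missing M c x = {g\<in>{1..k}. \<forall>e\<in>M. x \<in> ends e \<longrightarrow> c e \<noteq> g}"

lemma card_ends: "e \<in> E \<Longrightarrow> card (ends e) = 2"
  using ends_E by auto

lemma k_le_card_missing_plus_deg:
  assumes "M \<subseteq> E"
  shows "k \<le> card (missing M c x) + deg M ends x"
proof -
  have finM: "finite M" using assms finite_E by (rule finite_subset)
  have "k = card {1..k}" by simp
  also have "\<dots> \<le> card (missing M c x \<union> c ` {e\<in>M. x \<in> ends e})"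
    by (rule card_mono) (auto simp: missing_def finM)
  also have "\<dots> \<le> card (missing M c x) + card (c ` {e\<in>M. x \<in> ends e})" by (rule card_Un_le)
  also have "card (c ` {e\<in>M. x \<in> ends e}) \<le> deg M ends x"
    unfolding deg_def by (rule card_image_le) (simp add: finM)
  finally show ?thesis by simp
qed

definition bichromatic :: "'e set \<Rightarrow> ('e \<Rightarrow> nat) \<Rightarrow> nat \<Rightarrow> nat \<Rightarrow> 'e set" where
  "bichromatic M c a b = {e\<in>M. c e \<in> {a, b}}"

definition kempe_component :: "'e set \<Rightarrow> ('e \<Rightarrow> nat) \<Rightarrow> nat \<Rightarrow> nat \<Rightarrow> 'e \<Rightarrow> 'e set" where
  "kempe_component M c a b h = {f. (h, f) \<in> (edge_adjacency ends (bichromatic M c a b))\<^sup>*}"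

definition adjacency_closed :: "'e set \<Rightarrow> 'e set \<Rightarrow> bool" where
  "adjacency_closed K H \<longleftrightarrow> K \<subseteq> H \<and> (\<forall>f\<in>K. \<forall>g\<in>H. ends f \<inter> ends g \<noteq> {} \<longrightarrow> g \<in> K)"

definition kempe_swap :: "'e set \<Rightarrow> nat \<Rightarrow> nat \<Rightarrow> ('e \<Rightarrow> nat) \<Rightarrow> 'e \<Rightarrow> nat" where
  "kempe_swap K a b c e = (if e \<in> K then transpose a b (c e) else c e)"

lemma proper_edge_coloring_kempe_swap:
  assumes proper: "proper_edge_coloring ends M k c" and ab: "a \<in> {1..k}" "b \<in> {1..k}"
    and closed: "adjacency_closed K (bichromatic M c a b)"
  shows "proper_edge_coloring ends M k (kempe_swap K a b c)"
proof -
  have col: "\<forall>e\<in>M. c e \<in> {1..k}"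
    and dist: "\<forall>e\<in>M. \<forall>e'\<in>M. e \<noteq> e' \<and> ends e \<inter> ends e' \<noteq> {} \<longrightarrow> c e \<noteq> c e'"
    using proper unfolding proper_edge_coloring_def by auto
  have K_ab: "e \<in> M \<and> c e \<in> {a, b}" if "e \<in> K" for e
    using closed that unfolding adjacency_closed_def bichromatic_def by auto
  have outside_ab: "c e' \<notin> {a, b}"
    if "e \<in> K" "e' \<in> M" "e' \<notin> K" "ends e \<inter> ends e' \<noteq> {}" for e e'
    using closed that unfolding adjacency_closed_def bichromatic_def by auto
  have "kempe_swap K a b c e \<noteq> kempe_swap K a b c e'"
    if e: "e \<in> M" "e' \<in> M" "e \<noteq> e'" "ends e \<inter> ends e' \<noteq> {}" "ends e' \<inter> ends e \<noteq> {}" for e e'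
  proof -
    have ne: "c e \<noteq> c e'" using dist e by blast
    consider "e \<in> K \<longleftrightarrow> e' \<in> K" | "e \<in> K" "e' \<notin> K" | "e \<notin> K" "e' \<in> K" by blast
    then show ?thesis
    proof cases
      case 1 then show ?thesis using ne unfolding kempe_swap_def by (auto dest: transpose_eq_imp_eq)
    next
      case 2
      then have "c e \<in> {a, b}" "c e' \<notin> {a, b}" using K_ab outside_ab e by blast+
      then show ?thesis using 2 unfolding kempe_swap_def by (auto simp: transpose_eq_iff)
    next
      case 3
      then have "c e' \<in> {a, b}" "c e \<notin> {a, b}" using K_ab outside_ab[of e' e] e by blast+
      then show ?thesis using 3 unfolding kempe_swap_def by (auto simp: transpose_eq_iff)
    qed
  qed
  then have "kempe_swap K a b c e \<noteq> kempe_swap K a b c e'"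
    if "e \<in> M" "e' \<in> M" "e \<noteq> e'" "ends e \<inter> ends e' \<noteq> {}" for e e'
    using that by (simp add: Int_commute)
  moreover have "\<forall>e\<in>M. kempe_swap K a b c e \<in> {1..k}"
    using col ab unfolding kempe_swap_def transpose_def by auto
  ultimately show ?thesis unfolding proper_edge_coloring_def by blast
qed

lemma missing_kempe_swap_other_colour:
  "g \<noteq> a \<Longrightarrow> g \<noteq> b \<Longrightarrow> g \<in> missing M (kempe_swap K a b c) x \<longleftrightarrow> g \<in> missing M c x"
  unfolding missing_def kempe_swap_def by (auto simp: transpose_eq_iff)

lemma missing_kempe_swap_untouched:
  "\<not> (\<exists>f\<in>K. x \<in> ends f) \<Longrightarrow> missing M (kempe_swap K a b c) x = missing M c x"
  unfolding missing_def kempe_swap_def by auto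

lemma missing_kempe_swap_touched:
  assumes closed: "adjacency_closed K (bichromatic M c a b)" and "\<exists>f\<in>K. x \<in> ends f"
    and "b \<in> missing M c x" "a \<in> {1..k}" "a \<noteq> b"
  shows "a \<in> missing M (kempe_swap K a b c) x"
proof -
  obtain f where f: "f \<in> K" "x \<in> ends f" using assms(2) by auto
  have "kempe_swap K a b c e \<noteq> a" if e: "e \<in> M" "x \<in> ends e" for e
  proof (cases "e \<in> K")
    case True
    then show ?thesis using assms(3) e unfolding kempe_swap_def missing_def transpose_def by auto
  next
    case False
    then have "e \<notin> bichromatic M c a b" using closed f e unfolding adjacency_closed_def by blast
    then show ?thesis using False e unfolding kempe_swap_def bichromatic_def by auto
  qed
  then show ?thesis using assms(4) unfolding missing_def by auto
qed

lemma kempe_component_subset: "h \<in> bichromatic M c a b \<Longrightarrow> kempe_component M c a b h \<subseteq> bichromatic M c a b"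
proof
  fix f assume h: "h \<in> bichromatic M c a b" and "f \<in> kempe_component M c a b h"
  then have "(h, f) \<in> (edge_adjacency ends (bichromatic M c a b))\<^sup>*" unfolding kempe_component_def by auto
  then show "f \<in> bichromatic M c a b" using h
    by (induction rule: rtrancl_induct) (auto simp: edge_adjacency_def)
qed

lemma kempe_component_self: "h \<in> kempe_component M c a b h"
  unfolding kempe_component_def by auto

lemma kempe_component_closed:
  assumes "h \<in> bichromatic M c a b"
  shows "adjacency_closed (kempe_component M c a b h) (bichromatic M c a b)"
  unfolding adjacency_closed_def
proof (intro conjI ballI impI)
  show sub: "kempe_component M c a b h \<subseteq> bichromatic M c a b" using kempe_component_subset[OF assms] .
  fix f g assume f: "f \<in> kempe_component M c a b h" and g: "g \<in> bichromatic M c a b"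
    and "ends f \<inter> ends g \<noteq> {}"
  then have "(f, g) \<in> edge_adjacency ends (bichromatic M c a b)"
    using sub unfolding edge_adjacency_def by auto
  with f show "g \<in> kempe_component M c a b h"
    unfolding kempe_component_def by (auto intro: rtrancl_into_rtrancl)
qed

lemma kempe_component_trans: "f \<in> kempe_component M c a b h \<Longrightarrow> kempe_component M c a b f \<subseteq> kempe_component M c a b h"
  unfolding kempe_component_def by auto

lemma kempe_component_sym: "f \<in> kempe_component M c a b h \<Longrightarrow> h \<in> kempe_component M c a b f"
  unfolding kempe_component_def using edge_adjacency_rtrancl_sym by auto

lemma kempe_component_connected:
  assumes "h \<in> bichromatic M c a b"
  shows "\<forall>f\<in>kempe_component M c a b h. (h, f) \<in> (edge_adjacency ends (kempe_component M c a b h))\<^sup>*"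
proof
  let ?K = "kempe_component M c a b h"
  fix f assume "f \<in> ?K"
  then have "(h, f) \<in> (edge_adjacency ends (bichromatic M c a b))\<^sup>*" unfolding kempe_component_def by auto
  then show "(h, f) \<in> (edge_adjacency ends ?K)\<^sup>*"
  proof (induction rule: rtrancl_induct)
    case (step y z)
    then have "y \<in> ?K" "z \<in> ?K" unfolding kempe_component_def by (auto intro: rtrancl_into_rtrancl)
    then have "(y, z) \<in> edge_adjacency ends ?K" using step(2) unfolding edge_adjacency_def by auto
    with step.IH show ?case by (rule rtrancl_into_rtrancl)
  qed simp
qed

lemma deg_bichromatic_le:
  assumes "proper_edge_coloring ends M k c"
  shows "deg (bichromatic M c a b) ends x \<le> 2"
    and "a \<in> missing M c x \<or> b \<in> missing M c x \<Longrightarrow> deg (bichromatic M c a b) ends x \<le> 1"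
proof -
  let ?S = "{f\<in>bichromatic M c a b. x \<in> ends f}"
  have "inj_on c ?S"
    using assms unfolding inj_on_def proper_edge_coloring_def bichromatic_def by blast
  then have deg_eq: "deg (bichromatic M c a b) ends x = card (c ` ?S)"
    unfolding deg_def by (simp add: card_image)
  have "card (c ` ?S) \<le> card {a, b}" by (rule card_mono) (auto simp: bichromatic_def)
  also have "\<dots> \<le> 2" by (simp add: card_insert_le_m1)
  finally show "deg (bichromatic M c a b) ends x \<le> 2" using deg_eq by simp
  assume "a \<in> missing M c x \<or> b \<in> missing M c x"
  then obtain g where "c ` ?S \<subseteq> {g}" unfolding bichromatic_def missing_def by auto
  then have "card (c ` ?S) \<le> 1" using card_mono[of "{g}"] by fastforce
  then show "deg (bichromatic M c a b) ends x \<le> 1" using deg_eq by simp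
qed

lemma bichromatic_edge_unique:
  assumes "proper_edge_coloring ends M k c" "a \<in> missing M c x \<or> b \<in> missing M c x"
    and "f \<in> bichromatic M c a b" "f' \<in> bichromatic M c a b" "x \<in> ends f" "x \<in> ends f'"
  shows "f = f'"
proof (rule ccontr)
  assume "f \<noteq> f'"
  have "c f \<in> {a, b}" "c f' \<in> {a, b}" "c f \<notin> missing M c x" "c f' \<notin> missing M c x"
    using assms(3-6) unfolding bichromatic_def missing_def by auto
  then have "c f = c f'" using assms(2) by auto
  moreover have "f \<in> M" "f' \<in> M" using assms(3,4) unfolding bichromatic_def by auto
  ultimately show False
    using assms(1,5,6) \<open>f \<noteq> f'\<close> unfolding proper_edge_coloring_def by blast
qed

lemma kempe_component_no_three_leaves:
  assumes proper: "proper_edge_coloring ends M k c" and "M \<subseteq> E"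
    and h: "h \<in> bichromatic M c a b"
    and "x1 \<noteq> x2" "x1 \<noteq> x3" "x2 \<noteq> x3"
    and leaves: "\<forall>x\<in>{x1, x2, x3}. (\<exists>f\<in>kempe_component M c a b h. x \<in> ends f)
                     \<and> (a \<in> missing M c x \<or> b \<in> missing M c x)"
  shows False
proof -
  let ?H = "bichromatic M c a b" and ?K = "kempe_component M c a b h"
  have KH: "?K \<subseteq> ?H" using kempe_component_subset[OF h] .
  have KE: "?K \<subseteq> E" using KH \<open>M \<subseteq> E\<close> unfolding bichromatic_def by auto
  then have finK: "finite ?K" using finite_E finite_subset by blast
  have deg_le: "deg ?K ends x \<le> deg ?H ends x" for x
    unfolding deg_def using KH finite_E \<open>M \<subseteq> E\<close>
    by (intro card_mono) (auto simp: bichromatic_def intro: finite_subset)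
  show False
  proof (rule connected_max_deg_two_no_three_leaves[OF finK _ kempe_component_self
      kempe_component_connected[OF h] _ assms(4-6)])
    show "\<forall>f\<in>?K. card (ends f) = 2" using KE card_ends by blast
    show "\<forall>x. deg ?K ends x \<le> 2" using deg_bichromatic_le(1)[OF proper] deg_le le_trans by blast
    show "\<forall>x\<in>{x1, x2, x3}. (\<exists>f\<in>?K. x \<in> ends f) \<and> deg ?K ends x \<le> 1"
      using leaves deg_bichromatic_le(2)[OF proper] deg_le le_trans by blast
  qed
qed

lemma colour_present:
  "g \<in> {1..k} \<Longrightarrow> g \<notin> missing M c x \<Longrightarrow> \<exists>e\<in>M. x \<in> ends e \<and> c e = g"
  unfolding missing_def by auto

end

section \<open>Vizing fans\<close>

locale fan = loopless_edges E ends k for E :: "'e set" and ends :: "'e \<Rightarrow> 'a set" and k :: nat +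
  fixes v :: 'a
begin

definition other_end :: "'e \<Rightarrow> 'a" where
  "other_end e = (THE w. ends e = {v, w})"

lemma other_end:
  assumes "e \<in> E" "v \<in> ends e"
  shows "ends e = {v, other_end e}" "other_end e \<noteq> v"
proof -
  obtain w where w: "ends e = {v, w}" "w \<noteq> v"
    using ends_E assms by (metis insert_commute insertE singletonD)
  have "(THE w. ends e = {v, w}) = w"
    using w by (intro the_equality) (auto simp: doubleton_eq_iff)
  then show "ends e = {v, other_end e}" "other_end e \<noteq> v" using w unfolding other_end_def by auto
qed

lemma ends_eq_iff_other_end:
  assumes "e \<in> E"
  shows "ends e = {v, w} \<longleftrightarrow> v \<in> ends e \<and> other_end e = w"
  using other_end[OF assms] by (auto simp: doubleton_eq_iff)

text \<open>A fan chain from p is a list e_1, ..., e_n of M-edges at v in which the colour of e_i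
  is missing at the far end of e_(i-1) (at p for i = 1); these are the edges of a Vizing fan.\<close>
primrec fan_chain :: "'e set \<Rightarrow> ('e \<Rightarrow> nat) \<Rightarrow> 'a \<Rightarrow> 'e list \<Rightarrow> bool" where
  "fan_chain M c p [] = True"
| "fan_chain M c p (e # es) \<longleftrightarrow>
     e \<in> M \<and> v \<in> ends e \<and> c e \<in> missing M c p \<and> fan_chain M c (other_end e) es"

primrec chain_end :: "'a \<Rightarrow> 'e list \<Rightarrow> 'a" where
  "chain_end p [] = p"
| "chain_end p (e # es) = chain_end (other_end e) es"

lemma fan_chain_append:
  "fan_chain M c p (xs @ ys) \<longleftrightarrow> fan_chain M c p xs \<and> fan_chain M c (chain_end p xs) ys"
  by (induction xs arbitrary: p) auto

lemma chain_end_append: "chain_end p (xs @ ys) = chain_end (chain_end p xs) ys"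
  by (induction xs arbitrary: p) auto

lemma fan_chain_edges: "fan_chain M c p es \<Longrightarrow> e \<in> set es \<Longrightarrow> e \<in> M \<and> v \<in> ends e"
  by (induction es arbitrary: p) auto

lemma fan_chain_distinct:
  "fan_chain M c p es \<Longrightarrow>
     \<exists>es'. fan_chain M c p es' \<and> distinct es' \<and> chain_end p es' = chain_end p es"
proof (induction "length es" arbitrary: es rule: less_induct)
  case less
  show ?case
  proof (cases "distinct es")
    case False
    then obtain xs e ys zs where es: "es = xs @ e # ys @ e # zs"
      using not_distinct_decomp[OF False] by auto
    let ?es = "xs @ e # zs"
    have "fan_chain M c p ?es" "chain_end p ?es = chain_end p es" "length ?es < length es"
      using less.prems unfolding es by (auto simp: fan_chain_append chain_end_append)
    with less.hyps show ?thesis unfolding es by fastforce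
  qed (use less.prems in blast)
qed

lemma fan_chain_colours_distinct:
  assumes "proper_edge_coloring ends M k c" "fan_chain M c p es"
    and "e \<in> set es" "e' \<in> set es" "e \<noteq> e'"
  shows "c e \<noteq> c e'"
proof -
  have "e \<in> M" "e' \<in> M" "v \<in> ends e \<inter> ends e'" using fan_chain_edges assms(2-4) by blast+
  then show ?thesis using assms(1,5) unfolding proper_edge_coloring_def by blast
qed

lemma fan_chain_transfer:
  assumes "fan_chain M c p es"
    and "\<And>e. e \<in> set es \<Longrightarrow> e \<in> M' \<and> c' e = c e \<and> (\<forall>x. c e \<in> missing M c x \<longrightarrow> c e \<in> missing M' c' x)"
  shows "fan_chain M' c' p es"
  using assms by (induction es arbitrary: p) auto

definition blocked :: "'e set \<Rightarrow> 'e \<Rightarrow> bool" where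
  "blocked M e0 \<longleftrightarrow> e0 \<in> E \<and> e0 \<notin> M \<and> v \<in> ends e0 \<and> \<not> edge_colorable ends (insert e0 M) k"

definition fan_vertices :: "'e set \<Rightarrow> ('e \<Rightarrow> nat) \<Rightarrow> 'a set" where
  "fan_vertices M c =
     {y. \<exists>e0 es. blocked M e0 \<and> fan_chain M c (other_end e0) es \<and> y = chain_end (other_end e0) es}"

lemma fan_vertices_chain_end:
  "blocked M e0 \<Longrightarrow> fan_chain M c (other_end e0) es \<Longrightarrow> chain_end (other_end e0) es \<in> fan_vertices M c"
  unfolding fan_vertices_def by blast

lemma fan_vertices_snoc:
  assumes "y \<in> fan_vertices M c" "e \<in> M" "v \<in> ends e" "c e \<in> missing M c y"
  shows "other_end e \<in> fan_vertices M c"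
proof -
  obtain e0 es where "blocked M e0" "fan_chain M c (other_end e0) es" "y = chain_end (other_end e0) es"
    using assms(1) unfolding fan_vertices_def by auto
  with assms show ?thesis
    using fan_vertices_chain_end[of M e0 c "es @ [e]"] by (simp add: fan_chain_append chain_end_append)
qed

lemma fan_vertices_ne_centre:
  assumes "y \<in> fan_vertices M c" "M \<subseteq> E"
  shows "y \<noteq> v"
proof -
  have "chain_end p es \<noteq> v" if "fan_chain M c p es" "p \<noteq> v" for p es
    using that assms(2) by (induction es arbitrary: p) (auto dest: other_end(2))
  moreover obtain e0 es where "blocked M e0" "fan_chain M c (other_end e0) es" "y = chain_end (other_end e0) es"
    using assms(1) unfolding fan_vertices_def by auto
  ultimately show ?thesis using other_end(2) unfolding blocked_def by metis
qed

text \<open>For the empty chain, g colours e_0.  Otherwise recolouring e_0 with the colour of e_1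
  (missing at the far end of e_0) and uncolouring e_1 gives a colouring of the same size in which
  e_1 is blocked and the rest of the chain survives; induct on the chain.\<close>
lemma fan_chain_end_no_common_missing:
  assumes "proper_edge_coloring ends M k c" "M \<subseteq> E" "blocked M e0"
    "fan_chain M c (other_end e0) es" "distinct es"
    "g \<in> missing M c v" "g \<in> missing M c (chain_end (other_end e0) es)"
  shows False
  using assms
proof (induction es arbitrary: M c e0)
  case Nil
  have "ends e0 = {v, other_end e0}" using other_end Nil.prems(3) unfolding blocked_def by auto
  then have "proper_edge_coloring ends (insert e0 M) k (c(e0 := g))"
    using Nil.prems(1,3,6,7) unfolding proper_edge_coloring_def missing_def blocked_def
    by (auto simp: disjoint_iff)
  then show False using Nil.prems(3) unfolding blocked_def edge_colorable_def by blast
next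
  case (Cons e1 es)
  have e0: "e0 \<in> E" "e0 \<notin> M" "v \<in> ends e0" "\<not> edge_colorable ends (insert e0 M) k"
    using Cons.prems(3) unfolding blocked_def by auto
  have ends_e0: "ends e0 = {v, other_end e0}" using other_end e0 by auto
  have e1: "e1 \<in> M" "v \<in> ends e1" "c e1 \<in> missing M c (other_end e0)"
    "fan_chain M c (other_end e1) es"
    using Cons.prems(4) by auto
  define M' where "M' = insert e0 (M - {e1})"
  define c' where "c' = c(e0 := c e1)"
  have "e1 \<noteq> e0" using e0 e1 by auto
  have proper': "proper_edge_coloring ends M' k c'"
    using Cons.prems(1) e1(1-3) ends_e0 \<open>e1 \<noteq> e0\<close> e0(2)
    unfolding proper_edge_coloring_def M'_def c'_def missing_def
    by (auto simp: disjoint_iff) metis+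
  have "insert e1 M' = insert e0 M" using e1 unfolding M'_def by auto
  then have blocked': "blocked M' e1"
    unfolding blocked_def using e0 e1 Cons.prems(2) \<open>e1 \<noteq> e0\<close> M'_def by auto
  have missing': "g \<in> missing M' c' x" if "g \<in> missing M c x" "g \<noteq> c e1" for x g
    using that unfolding missing_def M'_def c'_def by auto
  have "fan_chain M' c' (other_end e1) es"
  proof (rule fan_chain_transfer[OF e1(4)])
    fix e assume e: "e \<in> set es"
    then have "e \<in> M" "e \<noteq> e1" using fan_chain_edges e1(4) Cons.prems(5) by auto
    then have "c e \<noteq> c e1" "e \<noteq> e0"
      using fan_chain_colours_distinct[OF Cons.prems(1,4), of e e1] e e0(2) by auto
    then show "e \<in> M' \<and> c' e = c e \<and> (\<forall>x. c e \<in> missing M c x \<longrightarrow> c e \<in> missing M' c' x)"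
      using \<open>e \<in> M\<close> \<open>e \<noteq> e1\<close> missing' unfolding M'_def c'_def by auto
  qed
  moreover have "g \<noteq> c e1" using Cons.prems(6) e1 unfolding missing_def by auto
  ultimately show False
    using Cons.IH[OF proper' _ blocked'] Cons.prems(2,5-7) missing' e0(1) M'_def by auto
qed

lemma missing_centre_disjoint_fan_vertex:
  assumes "proper_edge_coloring ends M k c" "M \<subseteq> E" "y \<in> fan_vertices M c"
  shows "missing M c v \<inter> missing M c y = {}"
proof (rule ccontr)
  assume "missing M c v \<inter> missing M c y \<noteq> {}"
  then obtain g where g: "g \<in> missing M c v" "g \<in> missing M c y" by blast
  obtain e0 es where "blocked M e0" "fan_chain M c (other_end e0) es" "y = chain_end (other_end e0) es"
    using assms(3) unfolding fan_vertices_def by auto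
  with fan_chain_distinct obtain es' where
    "fan_chain M c (other_end e0) es'" "distinct es'" "chain_end (other_end e0) es' = y"
    by metis
  with fan_chain_end_no_common_missing assms g \<open>blocked M e0\<close> show False by metis
qed

definition fan_vertex_avoiding :: "'e set \<Rightarrow> ('e \<Rightarrow> nat) \<Rightarrow> nat \<Rightarrow> 'a \<Rightarrow> bool" where
  "fan_vertex_avoiding M c b u \<longleftrightarrow> (\<exists>e0 es. blocked M e0 \<and> fan_chain M c (other_end e0) es \<and>
     (\<forall>e\<in>set es. c e \<noteq> b) \<and> u = chain_end (other_end e0) es)"

lemma fan_vertex_avoiding_fan_vertices: "fan_vertex_avoiding M c b u \<Longrightarrow> u \<in> fan_vertices M c"
  unfolding fan_vertex_avoiding_def fan_vertices_def by blast

text \<open>Cut the chain at its first edge of colour b: the colour is missing at the vertex reached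
  just before.\<close>
lemma fan_vertex_avoiding_exists:
  assumes "y \<in> fan_vertices M c" "b \<in> missing M c y"
  obtains u where "fan_vertex_avoiding M c b u" "b \<in> missing M c u"
proof -
  obtain e0 es where e0: "blocked M e0" and chain: "fan_chain M c (other_end e0) es"
    and b: "b \<in> missing M c (chain_end (other_end e0) es)"
    using assms unfolding fan_vertices_def by auto
  from chain b have "\<exists>es'. fan_chain M c (other_end e0) es' \<and> b \<in> missing M c (chain_end (other_end e0) es')
               \<and> (\<forall>e\<in>set es'. c e \<noteq> b)"
  proof (induction "length es" arbitrary: es rule: less_induct)
    case less
    show ?case
    proof (cases "\<exists>e\<in>set es. c e = b")
      case True
      then obtain xs e ys where es: "es = xs @ e # ys" "c e = b" by (metis split_list)
      then have "fan_chain M c (other_end e0) xs" "b \<in> missing M c (chain_end (other_end e0) xs)"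
        using less.prems(1) by (auto simp: fan_chain_append)
      moreover have "length xs < length es" using es by simp
      ultimately show ?thesis using less.hyps by blast
    qed (use less.prems in blast)
  qed
  with e0 that show ?thesis unfolding fan_vertex_avoiding_def by blast
qed

text \<open>Chains of the fan carry neither colour a (missing at v) nor colour b, so a swap on a
  component away from v leaves them intact.\<close>
lemma fan_chain_kempe_swap:
  assumes "a \<in> missing M c v" "fan_chain M c p es" "\<forall>e\<in>set es. c e \<noteq> b"
    and "\<not> (\<exists>f\<in>K. v \<in> ends f)"
  shows "fan_chain M (kempe_swap K a b c) p es"
proof (rule fan_chain_transfer[OF assms(2)])
  fix e assume e: "e \<in> set es"
  then have "e \<in> M" "v \<in> ends e" using fan_chain_edges assms(2) by blast+
  then have "c e \<noteq> a" "e \<notin> K" using assms(1,4) unfolding missing_def by auto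
  then show "e \<in> M \<and> kempe_swap K a b c e = c e \<and>
      (\<forall>x. c e \<in> missing M c x \<longrightarrow> c e \<in> missing M (kempe_swap K a b c) x)"
    using \<open>e \<in> M\<close> e assms(3) missing_kempe_swap_other_colour[of "c e" a b]
    unfolding kempe_swap_def by auto
qed

lemma fan_vertex_avoiding_kempe_swap:
  assumes "a \<in> missing M c v" "fan_vertex_avoiding M c b u" "\<not> (\<exists>f\<in>K. v \<in> ends f)"
  shows "u \<in> fan_vertices M (kempe_swap K a b c)"
  using assms fan_chain_kempe_swap fan_vertices_chain_end unfolding fan_vertex_avoiding_def by metis

lemma kempe_swap_at_fan_vertex_impossible:
  assumes proper: "proper_edge_coloring ends M k c" and "M \<subseteq> E"
    and "a \<in> missing M c v" "b \<in> missing M c x" "a \<noteq> b"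
    and closed: "adjacency_closed K (bichromatic M c a b)"
    and "\<not> (\<exists>f\<in>K. v \<in> ends f)" "\<exists>f\<in>K. x \<in> ends f"
    and "x \<in> fan_vertices M (kempe_swap K a b c)"
  shows False
proof -
  have ab: "a \<in> {1..k}" "b \<in> {1..k}" using assms(3,4) unfolding missing_def by auto
  have "proper_edge_coloring ends M k (kempe_swap K a b c)"
    using proper_edge_coloring_kempe_swap[OF proper ab closed] .
  moreover have "a \<in> missing M (kempe_swap K a b c) x"
    using missing_kempe_swap_touched[OF closed assms(8,4) ab(1) assms(5)] .
  moreover have "a \<in> missing M (kempe_swap K a b c) v"
    using missing_kempe_swap_untouched[OF assms(7)] assms(3) by simp
  ultimately show False using missing_centre_disjoint_fan_vertex assms(2,9) by blast
qed

text \<open>If the chain to y passes through the edge of colour b at v, reroute it through u, which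
  misses b also after the swap.\<close>
lemma fan_vertices_kempe_swap:
  assumes proper: "proper_edge_coloring ends M k c" and av: "a \<in> missing M c v"
    and "y \<in> fan_vertices M c" and u: "fan_vertex_avoiding M c b u" "b \<in> missing M c u"
    and away: "\<not> (\<exists>f\<in>K. v \<in> ends f)" "\<not> (\<exists>f\<in>K. u \<in> ends f)"
  shows "y \<in> fan_vertices M (kempe_swap K a b c)"
proof -
  let ?c = "kempe_swap K a b c"
  obtain e1 ys where "blocked M e1" "fan_chain M c (other_end e1) ys" "y = chain_end (other_end e1) ys"
    using assms(3) unfolding fan_vertices_def by auto
  with fan_chain_distinct obtain ys' where
    ys': "fan_chain M c (other_end e1) ys'" "distinct ys'" "chain_end (other_end e1) ys' = y"
    by metis
  show ?thesis
  proof (cases "\<forall>e\<in>set ys'. c e \<noteq> b")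
    case True
    then show ?thesis using fan_vertex_avoiding_kempe_swap[OF av _ away(1)] \<open>blocked M e1\<close> ys'
      unfolding fan_vertex_avoiding_def by blast
  next
    case False
    then obtain xs eb zs where ys'_eq: "ys' = xs @ eb # zs" "c eb = b" by (metis split_list)
    have zs: "fan_chain M c (other_end eb) zs" "chain_end (other_end eb) zs = y"
      and eb: "eb \<in> M" "v \<in> ends eb"
      using ys' unfolding ys'_eq by (auto simp: fan_chain_append chain_end_append)
    have "c e \<noteq> b" if "e \<in> set zs" for e
      using fan_chain_colours_distinct[OF proper ys'(1), of e eb] ys'(2) that ys'_eq by auto
    then have "fan_chain M ?c (other_end eb) zs"
      using fan_chain_kempe_swap[OF av zs(1) _ away(1)] by blast
    moreover obtain e0 es where e0: "blocked M e0" "fan_chain M c (other_end e0) es"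
      "\<forall>e\<in>set es. c e \<noteq> b" "u = chain_end (other_end e0) es"
      using u(1) unfolding fan_vertex_avoiding_def by blast
    moreover have "fan_chain M ?c (other_end e0) es"
      using fan_chain_kempe_swap[OF av e0(2,3) away(1)] .
    moreover have "fan_chain M ?c u [eb]"
      using eb away u(2) ys'_eq(2) missing_kempe_swap_untouched[OF away(2)]
      unfolding kempe_swap_def by auto
    ultimately have "fan_chain M ?c (other_end e0) (es @ [eb] @ zs)"
      by (simp add: fan_chain_append chain_end_append)
    then show ?thesis
      using fan_vertices_chain_end[OF e0(1)] zs(2) e0(4) by (fastforce simp: chain_end_append)
  qed
qed

lemma kempe_component_at_avoiding_vertex_meets_centre:
  assumes proper: "proper_edge_coloring ends M k c" and "M \<subseteq> E"
    and av: "a \<in> missing M c v" and "a \<noteq> b"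
    and u: "fan_vertex_avoiding M c b u" "b \<in> missing M c u"
    and h: "h \<in> bichromatic M c a b" "u \<in> ends h"
  shows "\<exists>f\<in>kempe_component M c a b h. v \<in> ends f"
proof (rule ccontr)
  assume away: "\<not> (\<exists>f\<in>kempe_component M c a b h. v \<in> ends f)"
  show False
    using kempe_swap_at_fan_vertex_impossible[OF proper \<open>M \<subseteq> E\<close> av u(2) \<open>a \<noteq> b\<close>
        kempe_component_closed[OF h(1)] away]
      fan_vertex_avoiding_kempe_swap[OF av u(1) away] kempe_component_self h(2) by blast
qed

lemma kempe_component_at_fan_vertex_meets_centre_or:
  assumes proper: "proper_edge_coloring ends M k c" and "M \<subseteq> E"
    and av: "a \<in> missing M c v" and "a \<noteq> b"
    and u: "fan_vertex_avoiding M c b u" "b \<in> missing M c u"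
    and y: "y \<in> fan_vertices M c" "b \<in> missing M c y"
    and h: "h \<in> bichromatic M c a b" "y \<in> ends h"
  shows "\<exists>f\<in>kempe_component M c a b h. v \<in> ends f \<or> u \<in> ends f"
proof (rule ccontr)
  assume "\<not> (\<exists>f\<in>kempe_component M c a b h. v \<in> ends f \<or> u \<in> ends f)"
  then have away: "\<not> (\<exists>f\<in>kempe_component M c a b h. v \<in> ends f)"
    "\<not> (\<exists>f\<in>kempe_component M c a b h. u \<in> ends f)" by auto
  show False
    using kempe_swap_at_fan_vertex_impossible[OF proper \<open>M \<subseteq> E\<close> av y(2) \<open>a \<noteq> b\<close>
        kempe_component_closed[OF h(1)] away(1)]
      fan_vertices_kempe_swap[OF proper av y(1) u away] kempe_component_self h(2) by blast
qed

text \<open>If b were missing at two fan vertices, let u be a fan vertex missing b that is reached by a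
  chain avoiding b, and u' one of the two other than u.  The (a, b)-component through the a-edge
  at u' would reach v and u as well, and so have three vertices of degree one.\<close>
lemma missing_fan_vertices_disjoint:
  assumes proper: "proper_edge_coloring ends M k c" and ME: "M \<subseteq> E"
    and av: "a \<in> missing M c v"
    and yz: "y \<in> fan_vertices M c" "z \<in> fan_vertices M c" "y \<noteq> z"
  shows "missing M c y \<inter> missing M c z = {}"
proof (rule ccontr)
  assume "missing M c y \<inter> missing M c z \<noteq> {}"
  then obtain b where b: "b \<in> missing M c y" "b \<in> missing M c z" by blast
  obtain u where u: "fan_vertex_avoiding M c b u" "b \<in> missing M c u"
    using fan_vertex_avoiding_exists[OF yz(1) b(1)] .
  define u' where "u' = (if u = y then z else y)"
  have u': "u' \<in> fan_vertices M c" "b \<in> missing M c u'" "u \<noteq> u'"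
    using yz b unfolding u'_def by auto
  have uR: "u \<in> fan_vertices M c" using fan_vertex_avoiding_fan_vertices[OF u(1)] .
  have ab: "a \<in> {1..k}" "b \<in> {1..k}" "a \<noteq> b"
    using av b missing_centre_disjoint_fan_vertex[OF proper ME yz(1)] unfolding missing_def by auto
  have not_missing: "b \<notin> missing M c v" "a \<notin> missing M c u" "a \<notin> missing M c u'"
    using av b(1) uR u'(1) missing_centre_disjoint_fan_vertex[OF proper ME] yz(1) by blast+
  obtain eb hu hu' where edges: "eb \<in> M" "v \<in> ends eb" "c eb = b" "hu \<in> M" "u \<in> ends hu" "c hu = a"
    "hu' \<in> M" "u' \<in> ends hu'" "c hu' = a"
    using colour_present ab(1,2) not_missing by metis
  let ?H = "bichromatic M c a b" and ?K = "kempe_component M c a b"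
  have H: "eb \<in> ?H" "hu \<in> ?H" "hu' \<in> ?H" using edges unfolding bichromatic_def by auto
  have unique: "f = f'" if "f \<in> ?H" "f' \<in> ?H" "x \<in> ends f" "x \<in> ends f'" "x \<in> {v, u}" for f f' x
    using bichromatic_edge_unique[OF proper _ that(1-4)] av u(2) that(5) by blast
  have "\<exists>f\<in>?K hu. v \<in> ends f"
    using kempe_component_at_avoiding_vertex_meets_centre[OF proper ME av ab(3) u H(2) edges(5)] .
  then have eb_Ku: "eb \<in> ?K hu"
    using unique[OF _ H(1) _ edges(2)] kempe_component_subset[OF H(2)] by blast
  have "\<exists>f\<in>?K hu'. v \<in> ends f \<or> u \<in> ends f"
    using kempe_component_at_fan_vertex_meets_centre_or[OF proper ME av ab(3) u u'(1,2) H(3) edges(8)] .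
  then have "eb \<in> ?K hu' \<or> hu \<in> ?K hu'"
    using unique[OF _ H(1) _ edges(2)] unique[OF _ H(2) _ edges(5)] kempe_component_subset[OF H(3)]
    by blast
  then have "eb \<in> ?K hu' \<and> hu \<in> ?K hu'"
    using eb_Ku kempe_component_sym kempe_component_trans by blast
  moreover have "v \<noteq> u" "v \<noteq> u'"
    using fan_vertices_ne_centre[OF _ ME] uR u'(1) by metis+
  ultimately show False
    using kempe_component_no_three_leaves[OF proper ME H(3) _ _ u'(3), of v] av u(2) u'(2)
      edges(2,5,8) kempe_component_self by blast
qed

section \<open>Counting the edges at v\<close>

lemma other_end_in_fan_vertices:
  assumes "maximal_colorable_subgraph E ends k M" "e \<in> E" "e \<notin> M" "v \<in> ends e"
  shows "other_end e \<in> fan_vertices M c"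
proof -
  have "blocked M e"
    using assms unfolding maximal_colorable_subgraph_def blocked_def by blast
  then show ?thesis using fan_vertices_chain_end[of M e c "[]"] by simp
qed

lemma sum_mult_eq_card_other_end:
  assumes "finite S" "X \<subseteq> E"
  shows "(\<Sum>w\<in>S. card {e\<in>X. ends e = {v, w}}) = card {e\<in>X. v \<in> ends e \<and> other_end e \<in> S}"
proof -
  have "(\<Sum>w\<in>S. card {e\<in>X. ends e = {v, w}}) = (\<Sum>w\<in>S. card {e\<in>X. v \<in> ends e \<and> other_end e = w})"
    using ends_eq_iff_other_end assms(2) by (intro sum.cong refl arg_cong[where f = card]) blast
  also have "\<dots> = card (\<Union>w\<in>S. {e\<in>X. v \<in> ends e \<and> other_end e = w})"
    using assms(1) finite_subset[OF assms(2) finite_E] by (intro card_UN_disjoint[symmetric]) auto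
  also have "(\<Union>w\<in>S. {e\<in>X. v \<in> ends e \<and> other_end e = w}) = {e\<in>X. v \<in> ends e \<and> other_end e \<in> S}"
    by auto
  finally show ?thesis .
qed

text \<open>Outside the fan every edge at v is already in M.\<close>
lemma sum_mult_outside_fan:
  assumes "maximal_colorable_subgraph E ends k M" "finite S" "S \<inter> fan_vertices M c = {}"
  shows "(\<Sum>w\<in>S. mult E ends v w) = card {e\<in>M. v \<in> ends e \<and> other_end e \<in> S}"
proof -
  have ME: "M \<subseteq> E" using assms(1) unfolding maximal_colorable_subgraph_def by blast
  have "e \<in> M" if "e \<in> E" "ends e = {v, w}" "w \<in> S" for e w
  proof (rule ccontr)
    assume "e \<notin> M"
    have "v \<in> ends e" "other_end e = w" using ends_eq_iff_other_end that(1,2) by auto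
    then show False
      using other_end_in_fan_vertices[OF assms(1) that(1) \<open>e \<notin> M\<close>] assms(3) that(3) by blast
  qed
  then have "{e\<in>E. ends e = {v, w}} = {e\<in>M. ends e = {v, w}}" if "w \<in> S" for w
    using that ME by blast
  then have "(\<Sum>w\<in>S. mult E ends v w) = (\<Sum>w\<in>S. card {e\<in>M. ends e = {v, w}})"
    unfolding mult_def by simp
  also have "\<dots> = card {e\<in>M. v \<in> ends e \<and> other_end e \<in> S}"
    using sum_mult_eq_card_other_end[OF assms(2) ME] .
  finally show ?thesis .
qed

text \<open>The missing sets of the fan vertices are pairwise disjoint, and each of their colours
  appears at v on an M-edge leading back into the fan.\<close>
lemma sum_card_missing_fan_le:
  assumes proper: "proper_edge_coloring ends M k c" and ME: "M \<subseteq> E"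
    and av: "a \<in> missing M c v" and "finite S" "S \<subseteq> fan_vertices M c"
  shows "(\<Sum>w\<in>S. card (missing M c w)) \<le> card {e\<in>M. v \<in> ends e \<and> other_end e \<in> fan_vertices M c}"
proof -
  let ?C = "\<Union>w\<in>S. missing M c w" and ?D = "{e\<in>M. v \<in> ends e \<and> other_end e \<in> fan_vertices M c}"
  have finM: "finite M" using ME finite_E finite_subset by blast
  have "(\<Sum>w\<in>S. card (missing M c w)) = card ?C"
    using missing_fan_vertices_disjoint[OF proper ME av] assms(4,5)
    by (intro card_UN_disjoint[symmetric]) (auto simp: missing_def)
  also have "?C \<subseteq> c ` ?D"
  proof
    fix g assume "g \<in> ?C"
    then obtain w where w: "w \<in> fan_vertices M c" "g \<in> missing M c w" using assms(5) by auto
    then have "g \<notin> missing M c v" "g \<in> {1..k}"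
      using missing_centre_disjoint_fan_vertex[OF proper ME] unfolding missing_def by blast+
    then obtain e where "e \<in> M" "v \<in> ends e" "c e = g" using colour_present by blast
    moreover have "other_end e \<in> fan_vertices M c"
      using fan_vertices_snoc w calculation by blast
    ultimately show "g \<in> c ` ?D" by blast
  qed
  then have "card ?C \<le> card (c ` ?D)" by (intro card_mono) (simp_all add: finM)
  also have "\<dots> \<le> card ?D" by (intro card_image_le) (simp add: finM)
  finally show ?thesis .
qed

lemma sum_mult_le_deg:
  assumes max: "maximal_colorable_subgraph E ends k M" and proper: "proper_edge_coloring ends M k c"
    and av: "a \<in> missing M c v" and "finite S"
    and mult_le: "\<forall>w\<in>S \<inter> fan_vertices M c. mult E ends v w \<le> card (missing M c w)"
  shows "(\<Sum>w\<in>S. mult E ends v w) \<le> deg M ends v"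
proof -
  let ?Y = "fan_vertices M c" and ?D = "\<lambda>T. {e\<in>M. v \<in> ends e \<and> other_end e \<in> T}"
  have ME: "M \<subseteq> E" using max unfolding maximal_colorable_subgraph_def by blast
  have finM: "finite M" using ME finite_E finite_subset by blast
  have "(\<Sum>w\<in>S. mult E ends v w) = (\<Sum>w\<in>S - ?Y. mult E ends v w) + (\<Sum>w\<in>S \<inter> ?Y. mult E ends v w)"
    using \<open>finite S\<close> by (metis add.commute sum.Int_Diff)
  also have "\<dots> \<le> card (?D (S - ?Y)) + card (?D ?Y)"
  proof (rule add_mono)
    have outside: "(S - ?Y) \<inter> ?Y = {}" by blast
    show "(\<Sum>w\<in>S - ?Y. mult E ends v w) \<le> card (?D (S - ?Y))"
      using sum_mult_outside_fan[OF max _ outside] \<open>finite S\<close> by simp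
    have "(\<Sum>w\<in>S \<inter> ?Y. mult E ends v w) \<le> (\<Sum>w\<in>S \<inter> ?Y. card (missing M c w))"
      using mult_le by (intro sum_mono) auto
    also have "\<dots> \<le> card (?D ?Y)"
      using sum_card_missing_fan_le[OF proper ME av] \<open>finite S\<close> by simp
    finally show "(\<Sum>w\<in>S \<inter> ?Y. mult E ends v w) \<le> card (?D ?Y)" .
  qed
  also have "\<dots> = card (?D (S - ?Y) \<union> ?D ?Y)"
    by (rule card_Un_disjoint[symmetric]) (auto simp: finM)
  also have "\<dots> \<le> deg M ends v"
    unfolding deg_def by (rule card_mono) (auto simp: finM)
  finally show ?thesis .
qed

end

lemma mult_le_mu:
  assumes "finite V" "v \<in> V"
  shows "mult E ends w v \<le> mu V E ends w"
  unfolding mu_def using assms by (intro Max_ge) auto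

lemma mult_commute: "mult E ends v w = mult E ends w v"
  unfolding mult_def by (simp add: insert_commute)

theorem mainTheorem1:
  fixes V :: "'a set" and E :: "'e set" and ends :: "'e \<Rightarrow> 'a set" and k :: nat and M :: "'e set"
  assumes "loopless_multigraph V E ends"
    and "k \<ge> 1"
    and "maximal_colorable_subgraph E ends k M"
  defines "F \<equiv> {v\<in>V. deg M ends v + mu V E ends v \<le> k}"
  shows "\<forall>v\<in>V. deg M ends v < k \<longrightarrow> degF E ends F v \<le> deg M ends v"
proof (intro ballI impI)
  fix v assume v: "v \<in> V" "deg M ends v < k"
  have finV: "finite V" using assms(1) unfolding loopless_multigraph_def by blast
  interpret fan E ends k v
    using assms(1) unfolding loopless_multigraph_def by unfold_locales blast+
  obtain c where proper: "proper_edge_coloring ends M k c"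
    using assms(3) unfolding maximal_colorable_subgraph_def edge_colorable_def by blast
  have ME: "M \<subseteq> E" using assms(3) unfolding maximal_colorable_subgraph_def by blast
  have "missing M c v \<noteq> {}" using k_le_card_missing_plus_deg[OF ME, of c v] v(2) by auto
  then obtain a where av: "a \<in> missing M c v" by blast
  have "mult E ends v w \<le> card (missing M c w)" if "w \<in> F" for w
  proof -
    have "mult E ends v w \<le> mu V E ends w" using mult_le_mu[OF finV v(1)] mult_commute by metis
    moreover have "deg M ends w + mu V E ends w \<le> k" using that unfolding F_def by blast
    ultimately show ?thesis using k_le_card_missing_plus_deg[OF ME, of c w] by linarith
  qed
  then show "degF E ends F v \<le> deg M ends v"
    unfolding degF_def using sum_mult_le_deg[OF assms(3) proper av] finV unfolding F_def by simp
qed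

end
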